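(* Let $X$ be a compact metric space, $f_1,f_2:X\to X$ continuous and $F=\{f_1,f_2\}$. The following are equivalent: (1) $F$ has the (Hausdorff metric) shadowing property; (2) $F^k$ has the shadowing property for every integer $k>1$; (3) $F^k$ has the shadowing property for some integer $k>1$.
   Context: Throughout, $(X,d)$ is a compact metric space, $\mathbb{N}=\{0,1,2,\dots\}$. $\mathbb{K}(X)$ is the set of nonempty compact subsets of $X$ with the Hausdorff metric $d_H(A,B)=\max\{\sup_{a\in A}\inf_{b\in B}d(a,b),\sup_{b\in B}\inf_{a\in A}d(a,b)\}$; a point $x$ is identified with $\{x\}$. Multiple mappings: $F=\{f_1,f_2\}$ maps $x$ to $F(x)=\{f_1(x),f_2(x)\}$; for $n\ge1$, $F^n(x)=\{f_{i_1}\cdots f_{i_n}(x): i_1,\dots,i_n\in\{1,2\}\}$, $F^0(x)=\{x\}$; for $A\in\mathbb{K}(X)$, $F^n(A)=\bigcup_{a\in A}F^n(a)$. For $k\ge1$, $F^k$ is regarded as the multiple mappings consisting of the $2^k$ maps $f_{i_1}\cdots f_{i_k}$, so $(F^k)^n=F^{kn}$. Shadowing: for $G=F$ or $G=F^k$, a sequence $\{A_n\}_{n\ge0}\subset\mathbb{K}(X)$ with $A_0$ a singleton is a $\delta$-pseudo orbit of $G$ if $d_H(G(A_n),A_{n+1})\le\delta$ for all $n\in\mathbb{N}$. $G$ has the shadowing property if for every $\epsilon>0$ there is $\delta>0$ such that for every $\delta$-pseudo orbit $\{A_n\}$ of $G$ there is $y\in X$ with $d_H(G^n(y),A_n)<\epsilon$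 for all $n\in\mathbb{N}$. *)

theory Defs
  imports "HOL-Analysis.Analysis"
begin

definition hdist :: "'a::metric_space set \<Rightarrow> 'a set \<Rightarrow> real" where
  "hdist A B = max (SUP a\<in>A. INF b\<in>B. dist a b) (SUP b\<in>B. INF a\<in>A. dist a b)"

text \<open>A multiple mapping is represented by the set of its constituent maps.
  mm_iter G n is the set of all n-fold compositions g_1 \<circ> ... \<circ> g_n with g_i \<in> G
  (mm_iter G 0 = {id}).  So F^k is mm_iter F k.\<close>
fun mm_iter :: "('a \<Rightarrow> 'a) set \<Rightarrow> nat \<Rightarrow> ('a \<Rightarrow> 'a) set" where
  "mm_iter G 0 = {id}"
| "mm_iter G (Suc n) = {g \<circ> h | g h. g \<in> G \<and> h \<in> mm_iter G n}"

definition mm_orbit :: "('a \<Rightarrow> 'a) set \<Rightarrow> nat \<Rightarrow> 'a \<Rightarrow> 'a set" where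
  "mm_orbit G n x = {g x | g. g \<in> mm_iter G n}"

definition mm_image :: "('a \<Rightarrow> 'a) set \<Rightarrow> 'a set \<Rightarrow> 'a set" where
  "mm_image G A = (\<Union>a\<in>A. {g a | g. g \<in> G})"

definition pseudo_orbit :: "('a::metric_space \<Rightarrow> 'a) set \<Rightarrow> real \<Rightarrow> (nat \<Rightarrow> 'a set) \<Rightarrow> bool" where
  "pseudo_orbit G \<delta> A \<longleftrightarrow>
     (\<forall>n. A n \<noteq> {} \<and> compact (A n)) \<and> (\<exists>x0. A 0 = {x0}) \<and>
     (\<forall>n. hdist (mm_image G (A n)) (A (Suc n)) \<le> \<delta>)"

definition shadowing :: "('a::metric_space \<Rightarrow> 'a) set \<Rightarrow> bool" where
  "shadowing G \<longleftrightarrow>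
     (\<forall>\<epsilon>>0. \<exists>\<delta>>0. \<forall>A. pseudo_orbit G \<delta> A \<longrightarrow>
        (\<exists>y. \<forall>n. hdist (mm_orbit G n y) (A n) < \<epsilon>))"

end

theory Submission
  imports Defs
begin

text \<open>
  A \<delta>-pseudo orbit \<open>A\<close> of \<open>F\<^sup>k\<close> becomes a \<delta>-pseudo orbit of \<open>F\<close> once the exact intermediate
  images \<open>F\<^sup>j(A n)\<close>, \<open>0 < j < k\<close>, are inserted, and a point shadowing the latter under \<open>F\<close>
  shadows \<open>A\<close> under \<open>F\<^sup>k\<close> along the multiples of \<open>k\<close>.
  Conversely, on a compact space the induced maps \<open>A \<mapsto> F\<^sup>j(A)\<close> of the hyperspace are
  uniformly continuous, uniformly in \<open>j \<le> k\<close>. Hence a fine enough pseudo orbit \<open>A\<close> of \<open>F\<close>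
  satisfies \<open>F\<^sup>j(A n) \<approx> A (n + j)\<close> for \<open>j \<le> k\<close>: the subsequence \<open>A (k n)\<close> is a pseudo orbit
  of \<open>F\<^sup>k\<close>, and a point shadowing it shadows all of \<open>A\<close> after applying \<open>F\<^sup>j\<close>.
\<close>

lemma ex_pos_forall_finite:
  fixes P :: "'i \<Rightarrow> real \<Rightarrow> bool"
  assumes "finite I" and "\<And>i. i \<in> I \<Longrightarrow> \<exists>d>0. P i d"
    and down: "\<And>i d d'. P i d \<Longrightarrow> 0 < d' \<Longrightarrow> d' \<le> d \<Longrightarrow> P i d'"
  shows "\<exists>d>0. \<forall>i\<in>I. P i d"
  using assms(1,2)
proof (induction I rule: finite_induct)
  case empty
  show ?case by (intro exI[of _ 1]) simp
next
  case (insert i I)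
  obtain d1 where "d1 > 0" "\<forall>j\<in>I. P j d1" using insert by blast
  moreover obtain d2 where "d2 > 0" "P i d2" using insert.prems by blast
  ultimately show ?case
    by (intro exI[of _ "min d1 d2"]) (auto intro: down)
qed

subsection \<open>The Hausdorff distance\<close>

lemma infdist_less_iff:
  assumes "B \<noteq> {}"
  shows "infdist x B < e \<longleftrightarrow> (\<exists>b\<in>B. dist x b < e)"
  using assms by (simp add: infdist_notempty cINF_less_iff)

lemma infdist_le_infdist_add:
  assumes "B \<noteq> {}" and "\<forall>b\<in>B. infdist b C \<le> h"
  shows "infdist a C \<le> infdist a B + h"
proof -
  have "infdist a C - h \<le> dist a b" if "b \<in> B" for b
    using that assms(2) infdist_triangle[of a C b] by (auto simp: dist_commute)
  then have "infdist a C - h \<le> (INF b\<in>B. dist a b)"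
    using assms(1) by (intro cINF_greatest) auto
  then show ?thesis using assms(1) by (simp add: infdist_notempty)
qed

lemma bdd_above_infdist_image:
  assumes "bounded (A \<union> B)"
  shows "bdd_above ((\<lambda>a. infdist a B) ` A)"
proof (cases "B = {}")
  case True
  then show ?thesis by (auto simp: infdist_def intro: bdd_aboveI2)
next
  case False
  then obtain b where "b \<in> B" by blast
  obtain e where "\<forall>x\<in>A \<union> B. \<forall>y\<in>A \<union> B. dist x y \<le> e"
    using assms bounded_two_points by blast
  then have "infdist a B \<le> e" if "a \<in> A" for a
    using that \<open>b \<in> B\<close> infdist_le[OF \<open>b \<in> B\<close>, of a] by (meson UnCI order_trans)
  then show ?thesis by (intro bdd_aboveI2)
qed

lemma hdist_infdist:
  assumes "A \<noteq> {}" and "B \<noteq> {}"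
  shows "hdist A B = max (SUP a\<in>A. infdist a B) (SUP b\<in>B. infdist b A)"
  using assms by (simp add: hdist_def infdist_notempty dist_commute)

lemma hdist_self: "A \<noteq> {} \<Longrightarrow> hdist A A = 0"
  by (simp add: hdist_infdist)

lemma hdist_le_iff:
  assumes "bounded A" and "bounded B" and "A \<noteq> {}" and "B \<noteq> {}"
  shows "hdist A B \<le> r \<longleftrightarrow> (\<forall>a\<in>A. infdist a B \<le> r) \<and> (\<forall>b\<in>B. infdist b A \<le> r)"
proof -
  have "bounded (A \<union> B)" "bounded (B \<union> A)" using assms(1,2) by auto
  then show ?thesis
    using assms(3,4) by (simp add: hdist_infdist cSUP_le_iff bdd_above_infdist_image)
qed

lemma hdist_triangle:
  assumes "bounded A" "bounded B" "bounded C" and "A \<noteq> {}" "B \<noteq> {}" "C \<noteq> {}"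
  shows "hdist A C \<le> hdist A B + hdist B C"
proof -
  have AB: "(\<forall>a\<in>A. infdist a B \<le> hdist A B) \<and> (\<forall>b\<in>B. infdist b A \<le> hdist A B)"
    using hdist_le_iff[of A B] assms by blast
  have BC: "(\<forall>b\<in>B. infdist b C \<le> hdist B C) \<and> (\<forall>c\<in>C. infdist c B \<le> hdist B C)"
    using hdist_le_iff[of B C] assms by blast
  have "infdist a C \<le> hdist A B + hdist B C" if "a \<in> A" for a
    using infdist_le_infdist_add[OF \<open>B \<noteq> {}\<close>, of C "hdist B C" a] AB BC that by fastforce
  moreover have "infdist c A \<le> hdist A B + hdist B C" if "c \<in> C" for c
    using infdist_le_infdist_add[OF \<open>B \<noteq> {}\<close>, of A "hdist A B" c] AB BC that by fastforce
  ultimately show ?thesis using hdist_le_iff[of A C] assms by blast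
qed

subsection \<open>Iterates of multiple mappings\<close>

lemma mm_image_empty_iff: "mm_image G A = {} \<longleftrightarrow> G = {} \<or> A = {}"
  unfolding mm_image_def by blast

lemma mm_image_id [simp]: "mm_image {id} A = A"
  unfolding mm_image_def by auto

lemma mm_image_mm_iter_Suc:
  "mm_image (mm_iter G (Suc n)) A = mm_image G (mm_image (mm_iter G n) A)"
  unfolding mm_image_def by fastforce

lemma mm_image_mm_iter_add:
  "mm_image (mm_iter G (m + n)) A = mm_image (mm_iter G m) (mm_image (mm_iter G n) A)"
  by (induction m) (simp_all only: add_Suc mm_image_mm_iter_Suc mm_iter.simps(1) add_0 mm_image_id)

lemma mm_image_mm_iter_mm_iter:
  "mm_image (mm_iter (mm_iter G k) n) A = mm_image (mm_iter G (k * n)) A"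
proof (induction n)
  case (Suc n)
  have "mm_image (mm_iter (mm_iter G k) (Suc n)) A = mm_image (mm_iter G k) (mm_image (mm_iter G (k * n)) A)"
    by (simp only: mm_image_mm_iter_Suc Suc)
  then show ?case by (simp add: mm_image_mm_iter_add)
qed simp

lemma mm_orbit_eq_mm_image: "mm_orbit G n x = mm_image (mm_iter G n) {x}"
  unfolding mm_orbit_def mm_image_def by auto

lemma mm_orbit_mm_iter: "mm_orbit (mm_iter G k) n x = mm_orbit G (k * n) x"
  by (simp only: mm_orbit_eq_mm_image mm_image_mm_iter_mm_iter)

lemma mm_orbit_add: "mm_orbit G (m + n) y = mm_image (mm_iter G m) (mm_orbit G n y)"
  by (simp only: mm_orbit_eq_mm_image mm_image_mm_iter_add)

lemma mm_iter_closed: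
  assumes "P id" and "\<And>g h. g \<in> G \<Longrightarrow> P h \<Longrightarrow> P (g \<circ> h)"
  shows "h \<in> mm_iter G n \<Longrightarrow> P h"
  by (induction n arbitrary: h) (auto intro: assms)

lemma finite_mm_iter: "finite G \<Longrightarrow> finite (mm_iter G n)"
proof (induction n)
  case (Suc n)
  have "mm_iter G (Suc n) = (\<lambda>(g, h). g \<circ> h) ` (G \<times> mm_iter G n)" by auto
  then show ?case using Suc by simp
qed simp

lemma mm_iter_empty_iff: "mm_iter G n = {} \<longleftrightarrow> G = {} \<and> n > 0"
  by (induction n) auto

lemma pseudo_orbit_mono: "pseudo_orbit G \<delta> A \<Longrightarrow> \<delta> \<le> \<delta>' \<Longrightarrow> pseudo_orbit G \<delta>' A"
  unfolding pseudo_orbit_def by (meson order_trans)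

lemma pseudo_orbit_subsequence:
  assumes "pseudo_orbit G \<delta> A"
    and "\<And>n. hdist (mm_image (mm_iter G k) (A n)) (A (n + k)) \<le> \<delta>'"
  shows "pseudo_orbit (mm_iter G k) \<delta>' (\<lambda>n. A (k * n))"
proof -
  have "hdist (mm_image (mm_iter G k) (A (k * n))) (A (k * Suc n)) \<le> \<delta>'" for n
    using assms(2)[of "k * n"] by (simp add: add.commute)
  then show ?thesis using assms(1) unfolding pseudo_orbit_def by auto
qed

subsection \<open>Multiple mappings on a compact space\<close>

locale compact_multiple_map =
  fixes G :: "('a::metric_space \<Rightarrow> 'a) set"
  assumes compact_space: "compact (UNIV :: 'a set)"
    and finite_maps: "finite G" and maps_nonempty: "G \<noteq> {}"
    and continuous_maps: "\<And>g. g \<in> G \<Longrightarrow> continuous_on UNIV g"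
begin

lemma bounded [simp]: "bounded (S :: 'a set)"
  using compact_imp_bounded[OF compact_space] bounded_subset by blast

lemma mm_image_nonempty: "A \<noteq> {} \<Longrightarrow> mm_image G A \<noteq> {}"
  using maps_nonempty by (simp add: mm_image_empty_iff)

lemma compact_mm_image:
  assumes "compact A"
  shows "compact (mm_image G A)"
proof -
  have "mm_image G A = (\<Union>g\<in>G. g ` A)" unfolding mm_image_def by blast
  moreover have "compact (g ` A)" if "g \<in> G" for g
    using continuous_on_subset[OF continuous_maps[OF that]] assms
    by (intro compact_continuous_image) auto
  ultimately show ?thesis using finite_maps by auto
qed

lemma compact_multiple_map_mm_iter: "compact_multiple_map (mm_iter G n)"
proof
  show "finite (mm_iter G n)" by (rule finite_mm_iter[OF finite_maps])
  show "mm_iter G n \<noteq> {}" using maps_nonempty by (simp add: mm_iter_empty_iff)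
  show "continuous_on UNIV h" if "h \<in> mm_iter G n" for h
    by (rule mm_iter_closed[OF _ _ that])
      (auto simp: o_def intro: continuous_on_compose2[OF continuous_maps])
qed (rule compact_space)

lemma hdist_mm_image_le:
  assumes "\<theta> > 0"
  shows "\<exists>\<rho>>0. \<forall>A B. A \<noteq> {} \<longrightarrow> B \<noteq> {} \<longrightarrow> hdist A B \<le> \<rho> \<longrightarrow>
           hdist (mm_image G A) (mm_image G B) \<le> \<theta>"
proof -
  have "\<exists>d>0. \<forall>x y. dist x y < d \<longrightarrow> dist (g x) (g y) < \<theta>" if "g \<in> G" for g
    using compact_uniformly_continuous[OF continuous_maps[OF that] compact_space] assms
    unfolding uniformly_continuous_on_def by (metis UNIV_I dist_commute)
  moreover have "\<forall>x y. dist x y < d' \<longrightarrow> dist (g x) (g y) < \<theta>"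
    if "\<forall>x y. dist x y < d \<longrightarrow> dist (g x) (g y) < \<theta>" "d' \<le> d" for g d d'
    using that by (meson less_le_trans)
  ultimately obtain d where d: "d > 0" "\<forall>g\<in>G. \<forall>x y. dist x y < d \<longrightarrow> dist (g x) (g y) < \<theta>"
    using ex_pos_forall_finite[OF finite_maps,
        of "\<lambda>g d. \<forall>x y. dist x y < d \<longrightarrow> dist (g x) (g y) < \<theta>"] by blast
  have one_side: "\<forall>z\<in>mm_image G A. infdist z (mm_image G B) \<le> \<theta>"
    if "B \<noteq> {}" "\<forall>a\<in>A. infdist a B \<le> d / 2" for A B
  proof
    fix z assume "z \<in> mm_image G A"
    then obtain g a where "g \<in> G" "a \<in> A" "z = g a" unfolding mm_image_def by blast
    moreover have "infdist a B < d" using that \<open>a \<in> A\<close> d(1) by force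
    then obtain b where "b \<in> B" "dist a b < d" using infdist_less_iff[OF \<open>B \<noteq> {}\<close>] by blast
    moreover have "g b \<in> mm_image G B" using \<open>g \<in> G\<close> \<open>b \<in> B\<close> unfolding mm_image_def by blast
    ultimately show "infdist z (mm_image G B) \<le> \<theta>"
      using d(2) infdist_le2[of "g b" "mm_image G B" z \<theta>] by force
  qed
  show ?thesis
  proof (intro exI[of _ "d / 2"] conjI allI impI)
    fix A B :: "'a set" assume A: "A \<noteq> {}" and B: "B \<noteq> {}" and "hdist A B \<le> d / 2"
    then have AB: "\<forall>a\<in>A. infdist a B \<le> d / 2" and BA: "\<forall>b\<in>B. infdist b A \<le> d / 2"
      using hdist_le_iff[OF bounded bounded A B] by blast+
    show "hdist (mm_image G A) (mm_image G B) \<le> \<theta>"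
      using one_side[OF B AB] one_side[OF A BA]
      by (simp add: hdist_le_iff[OF bounded bounded mm_image_nonempty[OF A] mm_image_nonempty[OF B]])
  qed (use d in simp)
qed

lemma mm_iter_image_nonempty: "A \<noteq> {} \<Longrightarrow> mm_image (mm_iter G j) A \<noteq> {}"
  by (rule compact_multiple_map.mm_image_nonempty[OF compact_multiple_map_mm_iter])

lemma compact_mm_iter_image: "compact A \<Longrightarrow> compact (mm_image (mm_iter G j) A)"
  by (rule compact_multiple_map.compact_mm_image[OF compact_multiple_map_mm_iter])

lemma hdist_mm_iter_image_le:
  assumes "\<theta> > 0"
  shows "\<exists>\<rho>>0. \<forall>j\<le>k. \<forall>A B. A \<noteq> {} \<longrightarrow> B \<noteq> {} \<longrightarrow> hdist A B \<le> \<rho> \<longrightarrow>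
           hdist (mm_image (mm_iter G j) A) (mm_image (mm_iter G j) B) \<le> \<theta>"
proof -
  let ?P = "\<lambda>j \<rho>. \<forall>A B. A \<noteq> {} \<longrightarrow> B \<noteq> {} \<longrightarrow> hdist A B \<le> \<rho> \<longrightarrow>
                   hdist (mm_image (mm_iter G j) A) (mm_image (mm_iter G j) B) \<le> \<theta>"
  have "\<exists>\<rho>>0. ?P j \<rho>" if "j \<in> {..k}" for j
    by (rule compact_multiple_map.hdist_mm_image_le[OF compact_multiple_map_mm_iter assms])
  moreover have "?P j \<rho>'" if "?P j \<rho>" "0 < \<rho>'" "\<rho>' \<le> \<rho>" for j \<rho> \<rho>'
    using that(1,3) by (meson order_trans)
  ultimately have "\<exists>\<rho>>0. \<forall>j\<in>{..k}. ?P j \<rho>"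
    by (rule ex_pos_forall_finite[OF finite_atMost])
  then show ?thesis by (simp only: atMost_iff Ball_def)
qed

lemma pseudo_orbit_mm_iter_close:
  assumes "\<theta> > 0"
  shows "\<exists>\<delta>>0. \<forall>A. pseudo_orbit G \<delta> A \<longrightarrow>
           (\<forall>n. hdist (mm_image (mm_iter G j) (A n)) (A (n + j)) \<le> \<theta>)"
  using assms
proof (induction j arbitrary: \<theta>)
  case 0
  have "hdist (A n) (A n) \<le> \<theta>" if "pseudo_orbit G 1 A" for A n
    using that 0 hdist_self[of "A n"] unfolding pseudo_orbit_def by simp
  then show ?case by (intro exI[of _ 1]) simp
next
  case (Suc j)
  obtain \<rho> where \<rho>: "\<rho> > 0" "\<forall>A B. A \<noteq> {} \<longrightarrow> B \<noteq> {} \<longrightarrow> hdist A B \<le> \<rho> \<longrightarrow>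
      hdist (mm_image G A) (mm_image G B) \<le> \<theta> / 2"
    using hdist_mm_image_le[of "\<theta> / 2"] Suc.prems by auto
  obtain \<delta> where \<delta>: "\<delta> > 0" "\<forall>A. pseudo_orbit G \<delta> A \<longrightarrow>
      (\<forall>n. hdist (mm_image (mm_iter G j) (A n)) (A (n + j)) \<le> \<rho>)"
    using Suc.IH[OF \<rho>(1)] by blast
  show ?case
  proof (intro exI[of _ "min \<delta> (\<theta> / 2)"] conjI allI impI)
    fix A n assume po: "pseudo_orbit G (min \<delta> (\<theta> / 2)) A"
    then have ne: "\<And>m. A m \<noteq> {}"
      and step: "\<And>m. hdist (mm_image G (A m)) (A (Suc m)) \<le> \<theta> / 2"
      unfolding pseudo_orbit_def by auto
    have "hdist (mm_image (mm_iter G j) (A n)) (A (n + j)) \<le> \<rho>"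
      using \<delta>(2) pseudo_orbit_mono[OF po] by simp
    then have near: "hdist (mm_image G (mm_image (mm_iter G j) (A n))) (mm_image G (A (n + j)))
        \<le> \<theta> / 2"
      by (rule \<rho>(2)[rule_format, OF mm_iter_image_nonempty[OF ne] ne])
    have "hdist (mm_image (mm_iter G (Suc j)) (A n)) (A (n + Suc j))
        \<le> hdist (mm_image G (mm_image (mm_iter G j) (A n))) (mm_image G (A (n + j)))
          + hdist (mm_image G (A (n + j))) (A (Suc (n + j)))"
      unfolding mm_image_mm_iter_Suc add_Suc_right
      by (intro hdist_triangle bounded mm_image_nonempty mm_iter_image_nonempty ne)
    then show "hdist (mm_image (mm_iter G (Suc j)) (A n)) (A (n + Suc j)) \<le> \<theta>"
      using near step[of "n + j"] by linarith
  qed (use \<delta>(1) Suc.prems in simp)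
qed

lemma pseudo_orbit_mm_iter_close_upto:
  assumes "\<theta> > 0"
  shows "\<exists>\<delta>>0. \<forall>A. pseudo_orbit G \<delta> A \<longrightarrow>
           (\<forall>j\<le>k. \<forall>n. hdist (mm_image (mm_iter G j) (A n)) (A (n + j)) \<le> \<theta>)"
proof -
  let ?P = "\<lambda>j \<delta>. \<forall>A. pseudo_orbit G \<delta> A \<longrightarrow>
                   (\<forall>n. hdist (mm_image (mm_iter G j) (A n)) (A (n + j)) \<le> \<theta>)"
  have "\<exists>\<delta>>0. ?P j \<delta>" if "j \<in> {..k}" for j
    by (rule pseudo_orbit_mm_iter_close[OF assms])
  moreover have "?P j \<delta>'" if "?P j \<delta>" "0 < \<delta>'" "\<delta>' \<le> \<delta>" for j \<delta> \<delta>'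
    using that(1,3) pseudo_orbit_mono by blast
  ultimately have "\<exists>\<delta>>0. \<forall>j\<in>{..k}. ?P j \<delta>"
    by (rule ex_pos_forall_finite[OF finite_atMost])
  then show ?thesis by (simp only: atMost_iff Ball_def) blast
qed

lemma pseudo_orbit_interpolate:
  assumes "0 < k" and "0 \<le> \<delta>" and po: "pseudo_orbit (mm_iter G k) \<delta> A"
  shows "pseudo_orbit G \<delta> (\<lambda>m. mm_image (mm_iter G (m mod k)) (A (m div k)))"
    (is "pseudo_orbit G \<delta> ?B")
  unfolding pseudo_orbit_def
proof (intro conjI allI)
  have ne: "\<And>n. A n \<noteq> {}" and cpt: "\<And>n. compact (A n)" and A0: "\<exists>x. A 0 = {x}"
    and step: "\<And>n. hdist (mm_image (mm_iter G k) (A n)) (A (Suc n)) \<le> \<delta>"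
    using po unfolding pseudo_orbit_def by auto
  fix m
  show "?B m \<noteq> {}" by (rule mm_iter_image_nonempty[OF ne])
  show "compact (?B m)" by (rule compact_mm_iter_image[OF cpt])
  show "hdist (mm_image G (?B m)) (?B (Suc m)) \<le> \<delta>"
  proof (cases "Suc (m mod k) = k")
    case True
    then have "Suc m mod k = 0" "Suc m div k = Suc (m div k)"
      by (simp_all add: mod_Suc div_Suc)
    moreover have "mm_image G (?B m) = mm_image (mm_iter G k) (A (m div k))"
      by (simp only: mm_image_mm_iter_Suc[symmetric] True)
    ultimately show ?thesis using step by simp
  next
    case False
    then have "Suc m mod k = Suc (m mod k)" "Suc m div k = m div k"
      by (simp_all add: mod_Suc div_Suc)
    then have "mm_image G (?B m) = ?B (Suc m)"
      by (simp only: mm_image_mm_iter_Suc)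
    then show ?thesis
      using \<open>0 \<le> \<delta>\<close> hdist_self[OF mm_iter_image_nonempty[OF ne]] by simp
  qed
  show "\<exists>x. ?B 0 = {x}" using A0 by simp
qed

lemma shadowing_mm_iter:
  assumes "0 < k" and "shadowing G"
  shows "shadowing (mm_iter G k)"
  unfolding shadowing_def
proof (intro allI impI)
  fix \<epsilon> :: real assume "\<epsilon> > 0"
  then obtain \<delta> where \<delta>: "\<delta> > 0" "\<forall>B. pseudo_orbit G \<delta> B \<longrightarrow>
      (\<exists>y. \<forall>m. hdist (mm_orbit G m y) (B m) < \<epsilon>)"
    using assms(2) unfolding shadowing_def by blast
  have "\<exists>y. \<forall>n. hdist (mm_orbit (mm_iter G k) n y) (A n) < \<epsilon>"
    if po: "pseudo_orbit (mm_iter G k) \<delta> A" for A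
  proof -
    obtain y where y: "\<forall>m. hdist (mm_orbit G m y)
        (mm_image (mm_iter G (m mod k)) (A (m div k))) < \<epsilon>"
      using \<delta>(2) pseudo_orbit_interpolate[OF assms(1) less_imp_le[OF \<delta>(1)] po] by blast
    have "hdist (mm_orbit G (k * n) y) (A n) < \<epsilon>" for n
      using y[rule_format, of "k * n"] assms(1) by simp
    then show ?thesis by (auto simp: mm_orbit_mm_iter)
  qed
  with \<delta>(1) show "\<exists>\<delta>>0. \<forall>A. pseudo_orbit (mm_iter G k) \<delta> A \<longrightarrow>
      (\<exists>y. \<forall>n. hdist (mm_orbit (mm_iter G k) n y) (A n) < \<epsilon>)" by blast
qed

lemma hdist_mm_orbit_le_of_multiples:
  assumes "0 < k" and ne: "\<And>n. A n \<noteq> {}"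
    and uniform: "\<forall>j\<le>k. \<forall>A B. A \<noteq> {} \<longrightarrow> B \<noteq> {} \<longrightarrow> hdist A B \<le> \<eta> \<longrightarrow>
      hdist (mm_image (mm_iter G j) A) (mm_image (mm_iter G j) B) \<le> \<theta>"
    and close: "\<And>j n. j \<le> k \<Longrightarrow> hdist (mm_image (mm_iter G j) (A n)) (A (n + j)) \<le> \<theta>'"
    and multiples: "\<And>n. hdist (mm_orbit G (k * n) y) (A (k * n)) \<le> \<eta>"
  shows "hdist (mm_orbit G m y) (A m) \<le> \<theta> + \<theta>'"
proof -
  define n j where "n = m div k" and "j = m mod k"
  then have "j \<le> k" and m: "m = j + k * n" using assms(1) by simp_all
  have "mm_orbit G (k * n) y \<noteq> {}"
    using mm_iter_image_nonempty by (simp add: mm_orbit_eq_mm_image)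
  then have "hdist (mm_orbit G m y) (mm_image (mm_iter G j) (A (k * n))) \<le> \<theta>"
    unfolding m mm_orbit_add by (rule uniform[rule_format, OF \<open>j \<le> k\<close> _ ne multiples])
  moreover have "hdist (mm_image (mm_iter G j) (A (k * n))) (A m) \<le> \<theta>'"
    using close[OF \<open>j \<le> k\<close>, of "k * n"] by (simp only: m add.commute[of j "k * n"])
  moreover have "hdist (mm_orbit G m y) (A m)
      \<le> hdist (mm_orbit G m y) (mm_image (mm_iter G j) (A (k * n)))
        + hdist (mm_image (mm_iter G j) (A (k * n))) (A m)"
    unfolding m mm_orbit_add
    by (intro hdist_triangle bounded mm_iter_image_nonempty ne \<open>mm_orbit G (k * n) y \<noteq> {}\<close>)
  ultimately show ?thesis by linarith
qed

lemma shadowing_of_shadowing_mm_iter: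
  assumes "0 < k" and "shadowing (mm_iter G k)"
  shows "shadowing G"
  unfolding shadowing_def
proof (intro allI impI)
  fix \<epsilon> :: real assume "\<epsilon> > 0"
  then have "\<epsilon> / 3 > 0" by simp
  then obtain \<eta> where \<eta>: "\<eta> > 0" "\<forall>j\<le>k. \<forall>A B. A \<noteq> {} \<longrightarrow> B \<noteq> {} \<longrightarrow> hdist A B \<le> \<eta> \<longrightarrow>
      hdist (mm_image (mm_iter G j) A) (mm_image (mm_iter G j) B) \<le> \<epsilon> / 3"
    using hdist_mm_iter_image_le[of "\<epsilon> / 3" k] by blast
  obtain \<delta>\<^sub>k where \<delta>\<^sub>k: "\<delta>\<^sub>k > 0" "\<forall>C. pseudo_orbit (mm_iter G k) \<delta>\<^sub>k C \<longrightarrow>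
      (\<exists>y. \<forall>n. hdist (mm_orbit (mm_iter G k) n y) (C n) < \<eta>)"
    using assms(2) \<eta>(1) unfolding shadowing_def by blast
  obtain \<delta> where \<delta>: "\<delta> > 0" "\<forall>A. pseudo_orbit G \<delta> A \<longrightarrow>
      (\<forall>j\<le>k. \<forall>n. hdist (mm_image (mm_iter G j) (A n)) (A (n + j)) \<le> min \<delta>\<^sub>k (\<epsilon> / 3))"
    using pseudo_orbit_mm_iter_close_upto[of "min \<delta>\<^sub>k (\<epsilon> / 3)" k] \<delta>\<^sub>k(1) \<open>\<epsilon> / 3 > 0\<close>
    by (meson min_less_iff_conj)
  have "\<exists>y. \<forall>m. hdist (mm_orbit G m y) (A m) < \<epsilon>" if po: "pseudo_orbit G \<delta> A" for A
  proof -
    have ne: "\<And>n. A n \<noteq> {}" using po unfolding pseudo_orbit_def by blast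
    have close: "\<And>j n. j \<le> k \<Longrightarrow>
        hdist (mm_image (mm_iter G j) (A n)) (A (n + j)) \<le> min \<delta>\<^sub>k (\<epsilon> / 3)"
      using \<delta>(2) po by blast
    have "pseudo_orbit (mm_iter G k) \<delta>\<^sub>k (\<lambda>n. A (k * n))"
      using pseudo_orbit_subsequence[OF po] close[of k] by simp
    then obtain y where y: "\<forall>n. hdist (mm_orbit G (k * n) y) (A (k * n)) < \<eta>"
      using \<delta>\<^sub>k(2) by (auto simp: mm_orbit_mm_iter)
    have "\<And>j n. j \<le> k \<Longrightarrow> hdist (mm_image (mm_iter G j) (A n)) (A (n + j)) \<le> \<epsilon> / 3"
      using close by (meson min.boundedE)
    moreover have "\<And>n. hdist (mm_orbit G (k * n) y) (A (k * n)) \<le> \<eta>"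
      using y by (simp add: less_imp_le)
    ultimately have "hdist (mm_orbit G m y) (A m) \<le> \<epsilon> / 3 + \<epsilon> / 3" for m
      by (rule hdist_mm_orbit_le_of_multiples[where A = A, OF assms(1) ne \<eta>(2)])
    moreover have "\<epsilon> / 3 + \<epsilon> / 3 < \<epsilon>" using \<open>\<epsilon> > 0\<close> by simp
    ultimately show ?thesis by (meson order_le_less_trans)
  qed
  with \<delta>(1) show "\<exists>\<delta>>0. \<forall>A. pseudo_orbit G \<delta> A \<longrightarrow>
      (\<exists>y. \<forall>n. hdist (mm_orbit G n y) (A n) < \<epsilon>)" by blast
qed

lemma shadowing_mm_iter_iff: "0 < k \<Longrightarrow> shadowing (mm_iter G k) \<longleftrightarrow> shadowing G"
  using shadowing_mm_iter shadowing_of_shadowing_mm_iter by blast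

end

theorem theorem4p1:
  fixes f1 f2 :: "'a::metric_space \<Rightarrow> 'a"
  assumes "compact (UNIV :: 'a set)"
    and "continuous_on UNIV f1" and "continuous_on UNIV f2"
  shows "(shadowing {f1, f2} \<longleftrightarrow> (\<forall>k::nat. k > 1 \<longrightarrow> shadowing (mm_iter {f1, f2} k)))
       \<and> ((\<forall>k::nat. k > 1 \<longrightarrow> shadowing (mm_iter {f1, f2} k))
            \<longleftrightarrow> (\<exists>k::nat. k > 1 \<and> shadowing (mm_iter {f1, f2} k)))"
proof -
  interpret compact_multiple_map "{f1, f2}"
    using assms by unfold_locales auto
  have "shadowing (mm_iter {f1, f2} k) \<longleftrightarrow> shadowing {f1, f2}" if "k > 1" for k :: nat
    using that by (simp add: shadowing_mm_iter_iff)
  moreover have "(2 :: nat) > 1" by simp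
  ultimately show ?thesis by blast
qed

end
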